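(* For $\gamma\in\mathbb R$ define $\omega_\gamma,\mathcal V:\mathbb R^2\to\mathbb R$ by $$\omega_\gamma(x,y)=\arctan\left(\frac{\cos x\sin\gamma}{\cos y+\cos x\cos\gamma}\right),\qquad \mathcal V(x,y)=\tfrac14\mathcal L\left(x+\tfrac\pi2-y\right)+\tfrac14\mathcal L\left(-x+\tfrac\pi2-y\right)+\tfrac12\mathcal L(y).$$ If $\alpha,\beta\in\mathbb R$, then $$2\,\mathcal V(\alpha,\omega_\gamma(\alpha,\beta))+2\,\mathcal V(\beta,\omega_\gamma(\beta,\alpha))=I_{\pi-\gamma}\left(\frac{\alpha-\beta-\gamma+\pi}2\right)-I_\gamma\left(\frac{\alpha+\beta+\gamma-\pi}2\right).$$
   Context: $\mathcal L(x)=-\int_0^x\log|2\sin\vartheta|\,d\vartheta$ is the Lobachevsky function, and $I_\phi(x)=\mathcal L(x)+\mathcal L(\phi-x)-2\mathcal L(\phi/2)$. The function $\arctan$ is extended to $\mathbb R\cup\{\pm\infty\}$ by $\arctan(+\infty)=\pi/2$, $\arctan(-\infty)=-\pi/2$. *)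

theory Defs
  imports "HOL-Analysis.Analysis"
begin

text \<open>Lobachevsky function: L(x) = - integral from 0 to x of log|2 sin t| dt
  (oriented Lebesgue interval integral; the integrand has integrable log singularities).\<close>
definition Lob :: "real \<Rightarrow> real" where
  "Lob x = - (LBINT t=ereal 0..ereal x. ln \<bar>2 * sin t\<bar>)"

definition Iphi :: "real \<Rightarrow> real \<Rightarrow> real" where
  "Iphi \<phi> x = Lob x + Lob (\<phi> - x) - 2 * Lob (\<phi> / 2)"

text \<open>arctan of c/d, extended: c/0 = +-infinity with arctan(+-infinity) = +-pi/2;
  0/0 is read as 0 (Isabelle's division convention).\<close>
definition ext_arctan_quot :: "real \<Rightarrow> real \<Rightarrow> real" where
  "ext_arctan_quot c d =
     (if d = 0 then (if c > 0 then pi/2 else if c < 0 then - pi/2 else 0)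
      else arctan (c / d))"

definition omega :: "real \<Rightarrow> real \<Rightarrow> real \<Rightarrow> real" where
  "omega \<gamma> x y = ext_arctan_quot (cos x * sin \<gamma>) (cos y + cos x * cos \<gamma>)"

definition VV :: "real \<Rightarrow> real \<Rightarrow> real" where
  "VV x y = Lob (x + pi/2 - y) / 4 + Lob (- x + pi/2 - y) / 4 + Lob y / 2"

end

theory Submission
  imports Defs "HOL-Real_Asymp.Real_Asymp"
begin

(*
  If sin \<gamma> = 0 both sides vanish, L being odd and \<pi>-periodic. Otherwise fix \<beta>, \<gamma> and regard
  both sides as functions of \<alpha>. The Lobachevsky function is continuous, odd, \<pi>-periodic, satisfies
  L(2x) = 2 L(x) + 2 L(x + \<pi>/2), and has derivative -ln |2 sin x| off the zeros of sin; in particular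
  V(x, y) is \<pi>-periodic in y. Modulo \<pi>, \<omega> = \<omega>_\<gamma>(\<alpha>, \<beta>) is the solution of
  cos \<beta> sin \<omega> = cos \<alpha> sin (\<gamma> - \<omega>), a relation invariant under \<alpha> <-> \<beta>, \<omega> <-> \<gamma> - \<omega>.
  Hence the left side is 2 V(\<alpha>, \<omega>) + 2 V(\<beta>, \<gamma> - \<omega>) for any local smooth branch \<omega>(\<alpha>) of that
  solution. Differentiating in \<alpha>, the terms containing \<omega>' cancel, because \<partial>V/\<partial>y (x, y) depends
  only on cos x / sin y; the remaining term 2 \<partial>V/\<partial>x (\<alpha>, \<omega>) equals
  1/2 ln |(cos \<beta> + cos (\<alpha> + \<gamma>)) / (cos \<beta> + cos (\<alpha> - \<gamma>))|, which is also the derivative of the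
  right side. Both sides are continuous and agree at \<alpha> = \<pi>/2 by the duplication formula.
*)

section \<open>The integrand ln |2 sin t|\<close>

lemma ln_abs: "ln \<bar>x\<bar> = ln x" for x :: real
  by (simp add: ln_real_def)

lemma isCont_x_ln_abs_0: "isCont (\<lambda>s::real. s * ln \<bar>s\<bar>) 0"
proof -
  have "((\<lambda>s::real. s * ln (-s)) \<longlongrightarrow> 0) (at_left 0)" "((\<lambda>s::real. s * ln s) \<longlongrightarrow> 0) (at_right 0)"
    by real_asymp+
  then have "((\<lambda>s::real. s * ln s) \<longlongrightarrow> 0) (at 0)"
    by (simp add: filterlim_split_at ln_minus)
  then show ?thesis
    by (simp add: isCont_def ln_abs)
qed

lemma ln_abs_diff_integrable: "(\<lambda>t. ln \<bar>t - x\<bar>) integrable_on {a..b}" for a b x :: real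
proof (cases "a \<le> b")
  case False then show ?thesis by (simp add: integrable_on_empty)
next
  case True
  define G where "G t = (t - x) * ln \<bar>t - x\<bar> - (t - x)" for t
  have "isCont G t" for t
  proof (cases "t = x")
    case True
    have "isCont (\<lambda>t. (\<lambda>s. s * ln \<bar>s\<bar>) (t - x)) t"
      by (rule isCont_o2[where f="\<lambda>t. t - x"]) (auto simp: True intro: isCont_x_ln_abs_0)
    then show ?thesis unfolding G_def by (intro isCont_diff) auto
  next
    case False
    then show ?thesis unfolding G_def by (intro continuous_intros) auto
  qed
  moreover have "(G has_real_derivative ln \<bar>t - x\<bar>) (at t)" if "t \<noteq> x" for t
  proof (cases "t > x")
    case True
    have "((\<lambda>t. (t - x) * ln (t - x) - (t - x)) has_real_derivative ln \<bar>t - x\<bar>) (at t)"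
      using True by (auto intro!: derivative_eq_intros)
    then show ?thesis
      by (rule has_field_derivative_transform_within_open[where S="{x<..}"]) (use True in \<open>auto simp: G_def\<close>)
  next
    case False
    with that have "t < x" by auto
    then have "((\<lambda>t. (t - x) * ln (x - t) - (t - x)) has_real_derivative ln \<bar>t - x\<bar>) (at t)"
      by (auto intro!: derivative_eq_intros simp: divide_simps)
    then show ?thesis
      by (rule has_field_derivative_transform_within_open[where S="{..<x}"]) (use \<open>t < x\<close> in \<open>auto simp: G_def\<close>)
  qed
  ultimately have "((\<lambda>t. ln \<bar>t - x\<bar>) has_integral (G b - G a)) {a..b}"
    using True by (intro fundamental_theorem_of_calculus_interior_strong[where S="{x}"])
      (auto simp: has_real_derivative_iff_has_vector_derivative[symmetric] continuous_at_imp_continuous_on)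
  then show ?thesis by blast
qed

lemma abs_le_2_abs_sin:
  fixes s :: real
  assumes "\<bar>s\<bar> \<le> 1"
  shows "\<bar>s\<bar> \<le> 2 * \<bar>sin s\<bar>"
proof -
  have "\<bar>s\<bar> / 2 - sin \<bar>s\<bar> \<le> 0 / 2 - sin 0"
  proof (rule DERIV_nonpos_imp_nonincreasing[where f="\<lambda>x. x/2 - sin x"])
    fix x assume x: "0 \<le> x" "x \<le> \<bar>s\<bar>"
    have "cos (pi/3) < cos x"
      using x assms pi_gt3 by (intro cos_monotone_0_pi) auto
    then have "1/2 - cos x \<le> 0" by (simp add: cos_60)
    then show "\<exists>y. ((\<lambda>x. x/2 - sin x) has_real_derivative y) (at x) \<and> y \<le> 0"
      by (auto intro!: derivative_eq_intros)
  qed simp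
  then show ?thesis by (cases "s \<ge> 0") auto
qed

definition ln_2sin :: "real \<Rightarrow> real" where
  "ln_2sin t = ln \<bar>2 * sin t\<bar>"

lemma ln_2sin_le: "ln_2sin t \<le> ln 2"
  unfolding ln_2sin_def by (cases "sin t = 0") (auto simp: abs_mult)

lemma ln_2sin_plus_pi [simp]: "ln_2sin (x + pi) = ln_2sin x"
  by (simp add: ln_2sin_def)

lemma abs_ln_2sin_le_near_zero:
  assumes "sin x = 0" "\<bar>t - x\<bar> < 1"
  shows "\<bar>ln_2sin t\<bar> \<le> ln 2 - ln \<bar>t - x\<bar>"
proof (cases "t = x")
  case True then show ?thesis using assms by (simp add: ln_2sin_def)
next
  case False
  have "\<bar>cos x\<bar> = 1" using assms(1) sin_zero_abs_cos_one by blast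
  moreover have "sin t = sin (t - x) * cos x"
    using sin_add[of "t - x" x] assms(1) by simp
  ultimately have "\<bar>sin t\<bar> = \<bar>sin (t - x)\<bar>" by (simp add: abs_mult)
  then have "\<bar>t - x\<bar> \<le> \<bar>2 * sin t\<bar>" using abs_le_2_abs_sin[of "t - x"] assms by (simp add: abs_mult)
  then have "ln \<bar>t - x\<bar> \<le> ln_2sin t" unfolding ln_2sin_def using False by (subst ln_le_cancel_iff) auto
  moreover have "ln \<bar>t - x\<bar> \<le> 0" using assms False by simp
  ultimately show ?thesis using ln_2sin_le[of t] ln_2_less_1 ln_gt_zero[of 2] by linarith
qed

lemma ln_2sin_borel_measurable: "ln_2sin \<in> borel_measurable (lebesgue_on S)"
proof -
  have "ln_2sin \<in> borel_measurable lborel" unfolding ln_2sin_def by measurable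
  then show ?thesis by (rule measurable_restrict_space1[OF measurable_completion])
qed

lemma ln_2sin_integrable: "ln_2sin integrable_on {a..b}"
  unfolding cbox_interval[symmetric]
proof (rule integrable_on_little_subintervals, intro ballI)
  fix x assume "x \<in> cbox a b"
  show "\<exists>d>0. \<forall>u v. x \<in> cbox u v \<and> cbox u v \<subseteq> ball x d \<and> cbox u v \<subseteq> cbox a b
          \<longrightarrow> ln_2sin integrable_on cbox u v"
  proof (cases "sin x = 0")
    case True
    \<comment> \<open>near a zero x of sin, dominate by the integrable singularity ln |t - x|\<close>
    have "ln_2sin integrable_on cbox u v" if "cbox u v \<subseteq> ball x 1" for u v
    proof (unfold cbox_interval, rule measurable_bounded_by_integrable_imp_integrable_real)
      show "(\<lambda>t. ln 2 - ln \<bar>t - x\<bar>) integrable_on {u..v}"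
        by (intro integrable_diff ln_abs_diff_integrable integrable_const_ivl)
      show "\<bar>ln_2sin t\<bar> \<le> ln 2 - ln \<bar>t - x\<bar>" if "t \<in> {u..v}" for t
        using \<open>cbox u v \<subseteq> ball x 1\<close> that True
        by (intro abs_ln_2sin_le_near_zero) (auto simp: cbox_interval dist_real_def subset_eq abs_minus_commute)
    qed (auto intro: ln_2sin_borel_measurable)
    then show ?thesis by (intro exI[of _ 1]) auto
  next
    case False
    obtain d where d: "d > 0" "\<And>t. dist x t < d \<Longrightarrow> sin t \<noteq> 0"
      using continuous_at_avoid[of x sin 0] False by auto
    have "ln_2sin integrable_on cbox u v" if "cbox u v \<subseteq> ball x d" for u v
    proof (rule integrable_continuous, intro continuous_at_imp_continuous_on ballI)
      fix t assume "t \<in> cbox u v"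
      then have "sin t \<noteq> 0" using that d by auto
      then show "isCont ln_2sin t" unfolding ln_2sin_def by (intro continuous_intros) auto
    qed
    then show ?thesis using d(1) by blast
  qed
qed

lemma ln_2sin_set_integrable: "set_integrable lborel {a..b} ln_2sin"
proof -
  have "(\<lambda>t. ln 2 - ln_2sin t) absolutely_integrable_on {a..b}"
    by (intro nonnegative_absolutely_integrable_1 integrable_diff ln_2sin_integrable)
      (auto simp: ln_2sin_le)
  then have "(\<lambda>t. ln 2 - (ln 2 - ln_2sin t)) absolutely_integrable_on {a..b}"
    by (rule set_integral_diff(1)[OF absolutely_integrable_continuous_real, rotated]) auto
  then have "integrable lebesgue (\<lambda>x. indicator {a..b} x *\<^sub>R ln_2sin x)"
    unfolding set_integrable_def by simp
  then show ?thesis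
    unfolding set_integrable_def by (subst (asm) integrable_completion) (auto simp: ln_2sin_def)
qed

section \<open>Constancy off a locally finite set, and trigonometric zeros\<close>

lemma DERIV_zero_locally_finite_constant:
  fixes h :: "real \<Rightarrow> real"
  assumes "\<And>x. isCont h x"
    and "\<And>x. x \<notin> E \<Longrightarrow> (h has_real_derivative 0) (at x)"
    and "\<And>a b. finite (E \<inter> {a..b})"
  shows "h x = h y"
proof -
  define S where "S = {min x y - 1 <..< max x y + 1}"
  obtain c where "\<And>z. z \<in> S \<Longrightarrow> h z = c"
  proof (rule DERIV_zero_connected_constant[of S "E \<inter> {min x y - 1 .. max x y + 1}" h])
    show "continuous_on S h" using assms(1) by (simp add: continuous_at_imp_continuous_on)
  qed (use assms(2,3) in \<open>auto simp: S_def\<close>)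
  moreover have "x \<in> S" "y \<in> S" by (auto simp: S_def)
  ultimately show ?thesis by simp
qed

lemma finite_sin_zeros_bounded:
  fixes S :: "real set"
  assumes "bounded S"
  shows "finite {x \<in> S. sin x = 0}"
proof -
  obtain R where R: "\<And>x. x \<in> S \<Longrightarrow> \<bar>x\<bar> \<le> R"
    using assms by (auto simp: bounded_real)
  define N where "N = \<lceil>R / pi\<rceil>"
  have "{x \<in> S. sin x = 0} \<subseteq> (\<lambda>k::int. of_int k * pi) ` {-N..N}"
  proof
    fix x assume x: "x \<in> {x \<in> S. sin x = 0}"
    then obtain k :: int where k: "x = of_int k * pi" by (auto simp: sin_zero_iff_int2)
    then have "\<bar>of_int k\<bar> * pi \<le> R" using R[of x] x by (simp add: abs_mult)
    then have "\<bar>of_int k\<bar> \<le> R / pi" by (simp add: field_simps)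
    then have "\<bar>real_of_int k\<bar> \<le> real_of_int N" unfolding N_def by linarith
    then have "k \<in> {-N..N}" by auto
    then show "x \<in> (\<lambda>k::int. of_int k * pi) ` {-N..N}" using k by blast
  qed
  then show ?thesis by (rule finite_subset) auto
qed

lemma finite_sin_comp_zeros:
  fixes f :: "real \<Rightarrow> real"
  assumes "inj f" "continuous_on {a..b} f"
  shows "finite ({x. sin (f x) = 0} \<inter> {a..b})"
proof -
  have "bounded (f ` {a..b})"
    using compact_continuous_image[OF assms(2) compact_Icc] by (rule compact_imp_bounded)
  then have "finite (f -` {y \<in> f ` {a..b}. sin y = 0})"
    using assms(1) by (intro finite_vimageI finite_sin_zeros_bounded)
  then show ?thesis by (rule finite_subset[rotated]) auto
qed

lemma finite_cos_comp_zeros: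
  fixes f :: "real \<Rightarrow> real"
  assumes "inj f" "continuous_on {a..b} f"
  shows "finite ({x. cos (f x) = 0} \<inter> {a..b})"
proof -
  have "inj (\<lambda>x. pi/2 - f x)" using assms(1) by (auto simp: inj_on_def)
  then have "finite ({x. sin (pi/2 - f x) = 0} \<inter> {a..b})"
    using assms(2) by (intro finite_sin_comp_zeros continuous_intros)
  then show ?thesis by (simp add: cos_sin_eq)
qed

lemma finite_cos_plus_cos_zeros: "finite ({x. cos b + cos (x + c) = 0} \<inter> {s..t})" for b c s t :: real
proof -
  have "inj (\<lambda>x. (b + (x + c)) / 2)" "inj (\<lambda>x. (b - (x + c)) / 2)"
    by (auto simp: inj_on_def)
  then have "finite ({x. cos ((b + (x + c)) / 2) = 0} \<inter> {s..t} \<union> {x. cos ((b - (x + c)) / 2) = 0} \<inter> {s..t})"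
    by (intro finite_UnI finite_cos_comp_zeros continuous_intros) auto
  then show ?thesis by (rule finite_subset[rotated]) (auto simp: cos_plus_cos)
qed

lemma sin_plus_pi_half_diff: "sin (x + pi/2 - y) = cos (x - y)" for x y :: real
proof -
  have "x + pi/2 - y = (x - y) + pi/2" by simp
  then show ?thesis by (simp only: sin_add) simp
qed

lemma sin_minus_plus_pi_half_diff: "sin (- x + pi/2 - y) = cos (x + y)" for x y :: real
proof -
  have "- x + pi/2 - y = pi/2 - (x + y)" by simp
  then show ?thesis by (simp only: sin_diff) simp
qed

lemma cos_diff_mult_cos_add: "cos (x - y) * cos (x + y) = cos x ^ 2 - sin y ^ 2" for x y :: real
proof -
  have "sin x ^ 2 + cos x ^ 2 = 1" "sin y ^ 2 + cos y ^ 2 = 1" by simp_all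
  then show ?thesis unfolding cos_add cos_diff by algebra
qed

section \<open>The Lobachevsky function\<close>

lemma Lob_eq_integral:
  assumes "-R \<le> x" "x \<le> R"
  shows "Lob x = integral {-R..0} ln_2sin - integral {-R..x} ln_2sin"
proof (cases "0 \<le> x")
  case True
  have "Lob x = - integral {0..x} ln_2sin"
    unfolding Lob_def ln_2sin_def[symmetric] using True ln_2sin_set_integrable
    by (simp add: interval_integral_eq_integral)
  moreover have "integral {-R..0} ln_2sin + integral {0..x} ln_2sin = integral {-R..x} ln_2sin"
    using True assms by (intro Henstock_Kurzweil_Integration.integral_combine ln_2sin_integrable) auto
  ultimately show ?thesis by linarith
next
  case False
  have "Lob x = integral {x..0} ln_2sin"
    unfolding Lob_def ln_2sin_def[symmetric] using False ln_2sin_set_integrable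
    by (subst interval_integral_endpoints_reverse) (simp add: interval_integral_eq_integral)
  moreover have "integral {-R..x} ln_2sin + integral {x..0} ln_2sin = integral {-R..0} ln_2sin"
    using False assms by (intro Henstock_Kurzweil_Integration.integral_combine ln_2sin_integrable) auto
  ultimately show ?thesis by linarith
qed

lemma isCont_Lob: "isCont Lob x"
proof -
  define R where "R = \<bar>x\<bar> + 1"
  have "continuous_on {-R..R} (\<lambda>y. integral {-R..0} ln_2sin - integral {-R..y} ln_2sin)"
    by (intro continuous_intros indefinite_integral_continuous_1 ln_2sin_integrable)
  then have "continuous_on {-R<..<R} Lob"
    by (rule continuous_on_eq[OF continuous_on_subset]) (auto intro: Lob_eq_integral[symmetric])
  then show ?thesis
    by (rule continuous_on_interior) (auto simp: R_def)
qed

lemma isCont_Lob' [continuous_intros]: "isCont g x \<Longrightarrow> isCont (\<lambda>x. Lob (g x)) x"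
  by (rule isCont_o2[OF _ isCont_Lob])

lemma DERIV_Lob:
  assumes "sin x \<noteq> 0"
  shows "(Lob has_real_derivative - ln_2sin x) (at x)"
proof -
  define R where "R = \<bar>x\<bar> + 1"
  have x: "x \<in> {-R<..<R}" by (auto simp: R_def)
  have "isCont ln_2sin x" unfolding ln_2sin_def using assms by (intro continuous_intros) auto
  then have "((\<lambda>u. integral {-R..u} ln_2sin) has_vector_derivative ln_2sin x) (at x within ({-R..R} - {}))"
    by (intro integral_has_vector_derivative_continuous_at)
       (use x ln_2sin_integrable in \<open>auto intro: continuous_at_imp_continuous_within\<close>)
  then have "((\<lambda>u. integral {-R..u} ln_2sin) has_real_derivative ln_2sin x) (at x)"
    using x by (simp add: has_real_derivative_iff_has_vector_derivative at_within_Icc_at)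
  then have "((\<lambda>u. integral {-R..0} ln_2sin - integral {-R..u} ln_2sin) has_real_derivative - ln_2sin x) (at x)"
    using DERIV_diff[OF DERIV_const] by fastforce
  then show ?thesis
    by (rule has_field_derivative_transform_within_open[where S="{-R<..<R}"])
       (use x in \<open>auto intro!: Lob_eq_integral[symmetric]\<close>)
qed

lemma DERIV_Lob_comp [derivative_intros]:
  assumes "(g has_real_derivative g') (at x within S)" "sin (g x) \<noteq> 0"
  shows "((\<lambda>x. Lob (g x)) has_real_derivative - ln_2sin (g x) * g') (at x within S)"
  by (rule DERIV_chain2[OF DERIV_Lob[OF assms(2)] assms(1)])

lemma Lob_0 [simp]: "Lob 0 = 0"
  by (simp add: Lob_def)

lemma Lob_minus: "Lob (- x) = - Lob x"
proof -
  have "Lob (- x) + Lob x = Lob (- 0) + Lob 0"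
  proof (rule DERIV_zero_locally_finite_constant[where h="\<lambda>x. Lob (- x) + Lob x" and E="{x. sin x = 0}"])
    fix x :: real assume "x \<notin> {x. sin x = 0}"
    then show "((\<lambda>x. Lob (- x) + Lob x) has_real_derivative 0) (at x)"
      by (auto intro!: derivative_eq_intros simp: ln_2sin_def)
  qed (intro continuous_intros, simp add: finite_sin_comp_zeros[of "\<lambda>x. x"])
  then show ?thesis by simp
qed

lemma Lob_double_shifted: "Lob (2 * x) = 2 * Lob x + 2 * Lob (x + pi/2) - 2 * Lob (pi/2)"
proof -
  have "Lob (2 * x) - 2 * Lob x - 2 * Lob (x + pi/2) = Lob (2 * 0) - 2 * Lob 0 - 2 * Lob (0 + pi/2)"
  proof (rule DERIV_zero_locally_finite_constant[where
        h="\<lambda>x. Lob (2 * x) - 2 * Lob x - 2 * Lob (x + pi/2)" and E="{x. sin (2 * x) = 0}"])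
    fix x :: real assume "x \<notin> {x. sin (2 * x) = 0}"
    then have s: "sin x \<noteq> 0" "cos x \<noteq> 0" "sin (2 * x) \<noteq> 0" "sin (x + pi/2) \<noteq> 0"
      by (auto simp: sin_double sin_add)
    have "\<bar>2 * sin (2 * x)\<bar> = \<bar>2 * sin x\<bar> * \<bar>2 * sin (x + pi/2)\<bar>"
      by (simp add: sin_double sin_add abs_mult)
    then have "ln_2sin (2 * x) = ln_2sin x + ln_2sin (x + pi/2)"
      using s by (simp add: ln_2sin_def ln_mult)
    then show "((\<lambda>x. Lob (2 * x) - 2 * Lob x - 2 * Lob (x + pi/2)) has_real_derivative 0) (at x)"
      using s by (auto intro!: derivative_eq_intros)
  qed (intro continuous_intros, intro finite_sin_comp_zeros continuous_intros, simp add: inj_on_def)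
  then show ?thesis by simp
qed

lemma Lob_pi [simp]: "Lob pi = 0"
  using Lob_double_shifted[of "pi/2"] by simp

lemma Lob_plus_pi: "Lob (x + pi) = Lob x"
proof -
  have "Lob (x + pi) - Lob x = Lob (0 + pi) - Lob 0"
  proof (rule DERIV_zero_locally_finite_constant[where h="\<lambda>x. Lob (x + pi) - Lob x" and E="{x. sin x = 0}"])
    fix x :: real assume "x \<notin> {x. sin x = 0}"
    then show "((\<lambda>x. Lob (x + pi) - Lob x) has_real_derivative 0) (at x)"
      by (auto intro!: derivative_eq_intros)
  qed (intro continuous_intros, simp add: finite_sin_comp_zeros[of "\<lambda>x. x"])
  then show ?thesis by simp
qed

lemma Lob_plus_of_int_pi: "Lob (x + of_int k * pi) = Lob x"
proof (induction k rule: int_induct[where k=0])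
  case (step1 i)
  then show ?case using Lob_plus_pi[of "x + of_int i * pi"] by (simp add: algebra_simps)
next
  case (step2 i)
  then show ?case using Lob_plus_pi[of "x + of_int (i - 1) * pi"] by (simp add: algebra_simps)
qed simp

lemma Lob_minus_pi: "Lob (x - pi) = Lob x"
  using Lob_plus_pi[of "x - pi"] by simp

lemma Lob_pi_half [simp]: "Lob (pi/2) = 0"
  using Lob_plus_pi[of "- (pi/2)"] by (simp add: Lob_minus)

lemma Lob_pi_half_minus: "Lob (pi/2 - x) = - Lob (x + pi/2)"
proof -
  have "Lob (pi/2 - x) = Lob (- (x + pi/2 - pi))" by (simp add: algebra_simps)
  then show ?thesis by (simp only: Lob_minus Lob_minus_pi)
qed

lemma Lob_double: "Lob (2 * x) = 2 * Lob x + 2 * Lob (x + pi/2)"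
  using Lob_double_shifted[of x] by simp

lemma Lob_of_int_pi_half: "Lob (of_int m * pi / 2) = 0"
proof (cases "even m")
  case True
  then obtain j where "m = 2 * j" by blast
  then show ?thesis using Lob_plus_of_int_pi[of 0 j] by simp
next
  case False
  then obtain j where "m = 2 * j + 1" using oddE by blast
  then show ?thesis using Lob_plus_of_int_pi[of "pi/2" j] by (simp add: field_simps)
qed

lemma Iphi_of_int_pi: "Iphi (of_int m * pi) x = 0"
proof -
  have "Lob (of_int m * pi - x) = Lob (- x + of_int m * pi)" by (simp add: algebra_simps)
  also have "\<dots> = - Lob x" by (simp only: Lob_plus_of_int_pi Lob_minus)
  finally show ?thesis unfolding Iphi_def using Lob_of_int_pi_half[of m] by simp
qed

lemma DERIV_Iphi_comp [derivative_intros]: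
  assumes "(g has_real_derivative g') (at x within S)" "sin (g x) \<noteq> 0" "sin (\<phi> - g x) \<noteq> 0"
  shows "((\<lambda>x. Iphi \<phi> (g x)) has_real_derivative ln \<bar>sin (\<phi> - g x) / sin (g x)\<bar> * g') (at x within S)"
  unfolding Iphi_def
  using assms by (auto intro!: derivative_eq_intros simp: ln_2sin_def ln_abs ln_mult ln_div field_simps)

section \<open>V and the angle \<omega>\<close>

lemma VV_plus_of_int_pi: "VV x (y + of_int k * pi) = VV x y"
proof -
  have "Lob (x + pi/2 - (y + of_int k * pi)) = Lob (x + pi/2 - y)"
    using Lob_plus_of_int_pi[of "x + pi/2 - y" "-k"] by (simp add: algebra_simps)
  moreover have "Lob (- x + pi/2 - (y + of_int k * pi)) = Lob (- x + pi/2 - y)"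
    using Lob_plus_of_int_pi[of "- x + pi/2 - y" "-k"] by (simp add: algebra_simps)
  ultimately show ?thesis by (simp add: VV_def Lob_plus_of_int_pi)
qed

lemma VV_cos_eq_0:
  assumes "cos x = 0"
  shows "VV x y = 0"
proof -
  obtain n :: int where n: "x = of_int n * pi + pi/2" using assms by (auto simp: cos_zero_iff_int2)
  have "Lob (x + pi/2 - y) = Lob (- y + of_int (n + 1) * pi)"
    by (rule arg_cong[where f=Lob]) (simp add: n algebra_simps)
  moreover have "Lob (- x + pi/2 - y) = Lob (- y + of_int (- n) * pi)"
    by (rule arg_cong[where f=Lob]) (simp add: n algebra_simps)
  ultimately show ?thesis by (simp only: VV_def Lob_plus_of_int_pi Lob_minus)
qed

lemma VV_0 [simp]: "VV x 0 = 0"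
proof -
  have "Lob (- x + pi/2) = - Lob ((x + pi/2) - pi)"
    using Lob_minus[of "(x + pi/2) - pi"] by (simp add: algebra_simps)
  then have "Lob (- x + pi/2) = - Lob (x + pi/2)"
    by (simp only: Lob_minus_pi)
  then show ?thesis by (simp add: VV_def)
qed

lemma sin_ext_arctan_quot:
  assumes "c \<noteq> 0 \<or> d \<noteq> 0"
  shows "sin (ext_arctan_quot c d) * d = cos (ext_arctan_quot c d) * c"
proof (cases "d = 0")
  case False
  have "sin (arctan (c / d)) = c / d * cos (arctan (c / d))"
    using tan_arctan[of "c/d"] cos_arctan_not_zero[of "c/d"] by (simp add: tan_def field_simps)
  then show ?thesis using False by (simp add: ext_arctan_quot_def field_simps)
qed (use assms in \<open>auto simp: ext_arctan_quot_def\<close>)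

lemma ext_arctan_quot_eq_mod_pi:
  assumes cd: "c \<noteq> 0 \<or> d \<noteq> 0" and rel: "sin \<theta> * d = cos \<theta> * c"
  obtains k :: int where "ext_arctan_quot c d = \<theta> + of_int k * pi"
proof -
  define w where "w = ext_arctan_quot c d"
  have "sin w * d = cos w * c" unfolding w_def by (rule sin_ext_arctan_quot[OF cd])
  then have "sin (w - \<theta>) * d = 0" "sin (w - \<theta>) * c = 0"
    using rel unfolding sin_diff by algebra+
  then have "sin (w - \<theta>) = 0" using cd by auto
  then obtain k :: int where "w - \<theta> = of_int k * pi" by (auto simp: sin_zero_iff_int2)
  then show ?thesis using that unfolding w_def by (simp add: algebra_simps)
qed

lemma VV_ext_arctan_quot:
  assumes "c \<noteq> 0 \<or> d \<noteq> 0" "sin \<theta> * d = cos \<theta> * c"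
  shows "VV x (ext_arctan_quot c d) = VV x \<theta>"
  using ext_arctan_quot_eq_mod_pi[OF assms] by (metis VV_plus_of_int_pi)

lemma omega_relation_iff:
  fixes \<alpha> \<beta> \<gamma> T :: real
  shows "sin T * (cos \<beta> + cos \<alpha> * cos \<gamma>) = cos T * (cos \<alpha> * sin \<gamma>) \<longleftrightarrow>
    cos \<beta> * sin T = cos \<alpha> * sin (\<gamma> - T)"
  unfolding sin_diff by algebra

lemma VV_omega:
  assumes "sin \<gamma> \<noteq> 0" "cos \<beta> * sin T = cos \<alpha> * sin (\<gamma> - T)"
  shows "VV \<alpha> (omega \<gamma> \<alpha> \<beta>) = VV \<alpha> T"
proof (cases "cos \<alpha> = 0")
  case False
  then show ?thesis
    unfolding omega_def using assms by (intro VV_ext_arctan_quot) (simp_all add: omega_relation_iff)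
qed (simp add: VV_cos_eq_0)

lemma VV_omega_sum:
  assumes "sin \<gamma> \<noteq> 0" "cos \<beta> * sin T = cos \<alpha> * sin (\<gamma> - T)"
  shows "VV \<alpha> (omega \<gamma> \<alpha> \<beta>) + VV \<beta> (omega \<gamma> \<beta> \<alpha>) = VV \<alpha> T + VV \<beta> (\<gamma> - T)"
  using VV_omega[OF assms] VV_omega[of \<gamma> \<alpha> "\<gamma> - T" \<beta>] assms by simp

lemma VV_omega_sum_cos_eq_0:
  assumes "sin \<gamma> \<noteq> 0" "cos \<beta> = 0"
  shows "VV a (omega \<gamma> a \<beta>) + VV \<beta> (omega \<gamma> \<beta> a) = VV a \<gamma>"
  using VV_omega_sum[OF assms(1), of \<beta> \<gamma> a] assms(2) by simp

lemma local_angle_branch: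
  fixes c d :: "real \<Rightarrow> real"
  assumes c: "\<And>x. (c has_real_derivative c' x) (at x)" and d: "\<And>x. (d has_real_derivative d' x) (at x)"
    and "c x0 \<noteq> 0 \<or> d x0 \<noteq> 0"
  obtains S \<theta> where "open S" "x0 \<in> S"
    "\<And>x. x \<in> S \<Longrightarrow> \<exists>t. (\<theta> has_real_derivative t) (at x)"
    "\<And>x. x \<in> S \<Longrightarrow> sin (\<theta> x) * d x = cos (\<theta> x) * c x"
proof (cases "d x0 = 0")
  case False
  show ?thesis
  proof (rule that[of "{x. d x \<noteq> 0}" "\<lambda>x. arctan (c x / d x)"])
    show "open {x. d x \<noteq> 0}"
      using d by (intro open_Collect_neq continuous_intros) (auto intro: DERIV_continuous_on)
    show "\<exists>t. ((\<lambda>x. arctan (c x / d x)) has_real_derivative t) (at x)" if "x \<in> {x. d x \<noteq> 0}" for x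
      using that by (auto intro!: derivative_eq_intros c d)
    show "sin (arctan (c x / d x)) * d x = cos (arctan (c x / d x)) * c x" if "x \<in> {x. d x \<noteq> 0}" for x
      using that by (simp add: sin_arctan cos_arctan field_simps)
  qed (use False in simp)
next
  case True
  with assms(3) have "c x0 \<noteq> 0" by simp
  show ?thesis
  proof (rule that[of "{x. c x \<noteq> 0}" "\<lambda>x. pi/2 - arctan (d x / c x)"])
    show "open {x. c x \<noteq> 0}"
      using c by (intro open_Collect_neq continuous_intros) (auto intro: DERIV_continuous_on)
    show "\<exists>t. ((\<lambda>x. pi/2 - arctan (d x / c x)) has_real_derivative t) (at x)" if "x \<in> {x. c x \<noteq> 0}" for x
      using that by (auto intro!: derivative_eq_intros c d)
    show "sin (pi/2 - arctan (d x / c x)) * d x = cos (pi/2 - arctan (d x / c x)) * c x"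
      if "x \<in> {x. c x \<noteq> 0}" for x
      using that unfolding sin_diff cos_diff by (simp add: sin_arctan cos_arctan field_simps)
  qed (use \<open>c x0 \<noteq> 0\<close> in simp)
qed

lemma omega_local_branch:
  assumes "sin \<gamma> \<noteq> 0" "cos \<beta> \<noteq> 0"
  obtains S \<theta> where "open S" "\<alpha>0 \<in> S"
    "\<And>a. a \<in> S \<Longrightarrow> \<exists>t. (\<theta> has_real_derivative t) (at a)"
    "\<And>a. a \<in> S \<Longrightarrow> cos \<beta> * sin (\<theta> a) = cos a * sin (\<gamma> - \<theta> a)"
proof -
  have "((\<lambda>a. cos a * sin \<gamma>) has_real_derivative - sin a * sin \<gamma>) (at a)"
    "((\<lambda>a. cos \<beta> + cos a * cos \<gamma>) has_real_derivative - sin a * cos \<gamma>) (at a)" for a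
    by (auto intro!: derivative_eq_intros)
  moreover have "cos \<alpha>0 * sin \<gamma> \<noteq> 0 \<or> cos \<beta> + cos \<alpha>0 * cos \<gamma> \<noteq> 0"
    using assms by auto
  ultimately obtain S \<theta> where "open S" "\<alpha>0 \<in> S" "\<And>a. a \<in> S \<Longrightarrow> \<exists>t. (\<theta> has_real_derivative t) (at a)"
    and rel: "\<And>a. a \<in> S \<Longrightarrow> sin (\<theta> a) * (cos \<beta> + cos a * cos \<gamma>) = cos (\<theta> a) * (cos a * sin \<gamma>)"
    by (rule local_angle_branch) blast
  then show thesis
    using that by (metis omega_relation_iff)
qed

section \<open>Partial derivatives of V\<close>

definition VV_dx :: "real \<Rightarrow> real \<Rightarrow> real" where
  "VV_dx x y = (ln_2sin (- x + pi/2 - y) - ln_2sin (x + pi/2 - y)) / 4"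

definition VV_dy :: "real \<Rightarrow> real \<Rightarrow> real" where
  "VV_dy x y = (ln_2sin (x + pi/2 - y) + ln_2sin (- x + pi/2 - y) - 2 * ln_2sin y) / 4"

lemma DERIV_VV:
  assumes "(\<phi> has_real_derivative \<phi>') (at a)" "(\<psi> has_real_derivative \<psi>') (at a)"
    and "cos (\<phi> a - \<psi> a) \<noteq> 0" "cos (\<phi> a + \<psi> a) \<noteq> 0" "sin (\<psi> a) \<noteq> 0"
  shows "((\<lambda>x. VV (\<phi> x) (\<psi> x)) has_real_derivative
           VV_dx (\<phi> a) (\<psi> a) * \<phi>' + VV_dy (\<phi> a) (\<psi> a) * \<psi>') (at a)"
proof -
  have "sin (\<phi> a + pi/2 - \<psi> a) \<noteq> 0"
    using assms(3) by (subst sin_plus_pi_half_diff)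
  moreover have "sin (- \<phi> a + pi/2 - \<psi> a) \<noteq> 0"
    using assms(4) by (subst sin_minus_plus_pi_half_diff)
  ultimately show ?thesis
    unfolding VV_def VV_dx_def VV_dy_def
    using assms(1,2,5) by (auto intro!: derivative_eq_intros simp: field_simps)
qed

lemma VV_dx_eq:
  assumes "cos (x - y) \<noteq> 0" "cos (x + y) \<noteq> 0"
  shows "VV_dx x y = ln \<bar>cos (x + y) / cos (x - y)\<bar> / 4"
  \<comment> \<open>sin_plus_pi_half_diff also matches sin (- x + pi/2 - y), so that term is rewritten first\<close>
  using assms unfolding VV_dx_def ln_2sin_def sin_minus_plus_pi_half_diff
  unfolding sin_plus_pi_half_diff
  by (simp add: ln_abs ln_mult ln_div)

lemma VV_dy_eq:
  assumes "cos (x - y) \<noteq> 0" "cos (x + y) \<noteq> 0" "sin y \<noteq> 0"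
  shows "VV_dy x y = ln \<bar>(cos x ^ 2 - sin y ^ 2) / sin y ^ 2\<bar> / 4"
  using assms
  unfolding VV_dy_def ln_2sin_def sin_minus_plus_pi_half_diff
  unfolding sin_plus_pi_half_diff cos_diff_mult_cos_add[symmetric]
  by (simp add: ln_abs ln_mult ln_div power2_eq_square)

context
  fixes \<alpha> \<beta> \<gamma> T :: real
  assumes rel: "cos \<beta> * sin T = cos \<alpha> * sin (\<gamma> - T)"
begin

lemma omega_relation_sin_ne_0:
  assumes "sin \<gamma> \<noteq> 0" "cos \<alpha> \<noteq> 0"
  shows "sin T \<noteq> 0"
proof
  assume "sin T = 0"
  then have "sin \<gamma> * cos T = 0" using rel assms(2) by (simp add: sin_diff)
  then show False using \<open>sin T = 0\<close> assms(1) sin_cos_squared_add[of T] by simp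
qed

lemma omega_relation_cos_add_diff:
  "cos (\<alpha> + T) * (cos \<beta> + cos (\<alpha> - \<gamma>)) = cos (\<alpha> - T) * (cos \<beta> + cos (\<alpha> + \<gamma>))"
  using rel unfolding cos_add cos_diff sin_diff by algebra

lemma omega_relation_cos_ne_0:
  assumes "sin \<gamma> \<noteq> 0" "cos \<alpha> \<noteq> 0"
    and "cos \<beta> + cos (\<alpha> + \<gamma>) \<noteq> 0" "cos \<beta> + cos (\<alpha> - \<gamma>) \<noteq> 0"
  shows "cos (\<alpha> + T) \<noteq> 0" "cos (\<alpha> - T) \<noteq> 0"
proof -
  have sT: "sin T \<noteq> 0" using omega_relation_sin_ne_0 assms(1,2) .
  have "cos (\<alpha> + T) = 0 \<longleftrightarrow> cos (\<alpha> - T) = 0"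
    using omega_relation_cos_add_diff assms(3,4) by auto
  moreover have False if "cos (\<alpha> + T) = 0" "cos (\<alpha> - T) = 0"
  proof -
    have "cos \<alpha> * cos T = 0" "sin \<alpha> * sin T = 0"
      using that unfolding cos_add cos_diff by linarith+
    then have "cos T = 0" "sin \<alpha> = 0" using assms(2) sT by simp_all
    then have "(cos \<beta> + cos (\<alpha> + \<gamma>)) * sin T = 0"
      using rel by (simp add: cos_add sin_diff algebra_simps)
    then show False using assms(3) sT by simp
  qed
  ultimately show "cos (\<alpha> + T) \<noteq> 0" "cos (\<alpha> - T) \<noteq> 0" by blast+
qed

lemma VV_dx_omega:
  assumes "sin \<gamma> \<noteq> 0" "cos \<alpha> \<noteq> 0"
    and "cos \<beta> + cos (\<alpha> + \<gamma>) \<noteq> 0" "cos \<beta> + cos (\<alpha> - \<gamma>) \<noteq> 0"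
  shows "VV_dx \<alpha> T = ln \<bar>(cos \<beta> + cos (\<alpha> + \<gamma>)) / (cos \<beta> + cos (\<alpha> - \<gamma>))\<bar> / 4"
proof -
  note nz = omega_relation_cos_ne_0[OF assms]
  have "cos (\<alpha> + T) / cos (\<alpha> - T) = (cos \<beta> + cos (\<alpha> + \<gamma>)) / (cos \<beta> + cos (\<alpha> - \<gamma>))"
    using omega_relation_cos_add_diff nz assms(4) by (simp add: field_simps)
  then show ?thesis using VV_dx_eq[OF nz(2,1)] by simp
qed

lemma omega_relation_squared:
  "(cos \<beta> ^ 2 - sin (\<gamma> - T) ^ 2) * sin T ^ 2 = (cos \<alpha> ^ 2 - sin T ^ 2) * sin (\<gamma> - T) ^ 2"
  using rel by algebra

text \<open>By VV_dy_eq, VV_dy x y depends only on cos x / sin y, and the relation says that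
  cos \<alpha> / sin T = cos \<beta> / sin (\<gamma> - T).\<close>
lemma VV_dy_omega:
  assumes "cos (\<alpha> - T) \<noteq> 0" "cos (\<alpha> + T) \<noteq> 0" "sin T \<noteq> 0" "sin (\<gamma> - T) \<noteq> 0"
  shows "cos (\<beta> - (\<gamma> - T)) \<noteq> 0" "cos (\<beta> + (\<gamma> - T)) \<noteq> 0" "VV_dy \<alpha> T = VV_dy \<beta> (\<gamma> - T)"
proof -
  have "cos \<alpha> ^ 2 - sin T ^ 2 \<noteq> 0"
    using assms(1,2) cos_diff_mult_cos_add[of \<alpha> T] by auto
  then have "cos (\<beta> - (\<gamma> - T)) * cos (\<beta> + (\<gamma> - T)) \<noteq> 0"
    using omega_relation_squared assms(3,4) by (auto simp: cos_diff_mult_cos_add)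
  then show nz: "cos (\<beta> - (\<gamma> - T)) \<noteq> 0" "cos (\<beta> + (\<gamma> - T)) \<noteq> 0" by auto
  have "(cos \<alpha> ^ 2 - sin T ^ 2) / sin T ^ 2 = (cos \<beta> ^ 2 - sin (\<gamma> - T) ^ 2) / sin (\<gamma> - T) ^ 2"
    using omega_relation_squared assms(3,4) by (simp add: field_simps)
  then show "VV_dy \<alpha> T = VV_dy \<beta> (\<gamma> - T)"
    using VV_dy_eq[OF assms(1-3)] VV_dy_eq[OF nz assms(4)] by simp
qed

end


section \<open>Both sides as functions of \<alpha>\<close>

lemma isCont_VV_omega_sum:
  assumes "sin \<gamma> \<noteq> 0"
  shows "isCont (\<lambda>a. VV a (omega \<gamma> a \<beta>) + VV \<beta> (omega \<gamma> \<beta> a)) \<alpha>"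
proof (cases "cos \<beta> = 0")
  case True
  have "(\<lambda>a. VV a (omega \<gamma> a \<beta>) + VV \<beta> (omega \<gamma> \<beta> a)) = (\<lambda>a. VV a \<gamma>)"
    using VV_omega_sum_cos_eq_0[OF assms True] by auto
  moreover have "isCont (\<lambda>a. VV a \<gamma>) \<alpha>"
    unfolding VV_def by (intro continuous_intros) auto
  ultimately show ?thesis by simp
next
  case False
  obtain S \<theta> where S: "open S" "\<alpha> \<in> S"
    and \<theta>: "\<And>a. a \<in> S \<Longrightarrow> \<exists>t. (\<theta> has_real_derivative t) (at a)"
    and rel: "\<And>a. a \<in> S \<Longrightarrow> cos \<beta> * sin (\<theta> a) = cos a * sin (\<gamma> - \<theta> a)"
    using omega_local_branch[OF assms False] by blast
  have "continuous_on S (\<lambda>a. VV a (\<theta> a) + VV \<beta> (\<gamma> - \<theta> a))"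
  proof (intro continuous_at_imp_continuous_on ballI)
    fix a assume "a \<in> S"
    then have "isCont \<theta> a" using \<theta> DERIV_isCont by blast
    then show "isCont (\<lambda>a. VV a (\<theta> a) + VV \<beta> (\<gamma> - \<theta> a)) a"
      unfolding VV_def by (intro continuous_intros \<open>isCont \<theta> a\<close>) auto
  qed
  then have "continuous_on S (\<lambda>a. VV a (omega \<gamma> a \<beta>) + VV \<beta> (omega \<gamma> \<beta> a))"
    by (rule continuous_on_eq) (use VV_omega_sum[OF assms rel] in auto)
  then show ?thesis using S by (simp add: continuous_on_eq_continuous_at)
qed

lemma DERIV_VV_omega_sum:
  assumes "sin \<gamma> \<noteq> 0" "cos \<alpha> \<noteq> 0"
    and n1: "cos \<beta> + cos (\<alpha> + \<gamma>) \<noteq> 0" and n2: "cos \<beta> + cos (\<alpha> - \<gamma>) \<noteq> 0"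
  shows "((\<lambda>a. VV a (omega \<gamma> a \<beta>) + VV \<beta> (omega \<gamma> \<beta> a)) has_real_derivative
           ln \<bar>(cos \<beta> + cos (\<alpha> + \<gamma>)) / (cos \<beta> + cos (\<alpha> - \<gamma>))\<bar> / 4) (at \<alpha>)"
proof (cases "cos \<beta> = 0")
  case True
  have eq: "(\<lambda>a. VV a (omega \<gamma> a \<beta>) + VV \<beta> (omega \<gamma> \<beta> a)) = (\<lambda>a. VV a \<gamma>)"
    using VV_omega_sum_cos_eq_0[OF assms(1) True] by auto
  have c: "cos (\<alpha> - \<gamma>) \<noteq> 0" "cos (\<alpha> + \<gamma>) \<noteq> 0"
    using n1 n2 True by simp_all
  have "((\<lambda>a. VV a \<gamma>) has_real_derivative VV_dx \<alpha> \<gamma> * 1 + VV_dy \<alpha> \<gamma> * 0) (at \<alpha>)"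
    using c assms(1) by (intro DERIV_VV[OF DERIV_ident DERIV_const])
  then show ?thesis
    unfolding eq by (rule DERIV_cong) (simp add: VV_dx_eq[OF c] True)
next
  case False
  obtain S \<theta> where S: "open S" "\<alpha> \<in> S"
    and \<theta>: "\<And>a. a \<in> S \<Longrightarrow> \<exists>t. (\<theta> has_real_derivative t) (at a)"
    and rel: "\<And>a. a \<in> S \<Longrightarrow> cos \<beta> * sin (\<theta> a) = cos a * sin (\<gamma> - \<theta> a)"
    using omega_local_branch[OF assms(1) False] by blast
  obtain t where t: "(\<theta> has_real_derivative t) (at \<alpha>)" using \<theta> S(2) by blast
  define T where "T = \<theta> \<alpha>"
  have relT: "cos \<beta> * sin T = cos \<alpha> * sin (\<gamma> - T)" using rel S(2) by (simp add: T_def)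
  have sT: "sin T \<noteq> 0" using omega_relation_sin_ne_0[OF relT assms(1,2)] .
  then have sgT: "sin (\<gamma> - T) \<noteq> 0" using relT False by auto
  note cT = omega_relation_cos_ne_0[OF relT assms]
  note dy = VV_dy_omega[OF relT cT(2,1) sT sgT]
  have "((\<lambda>a. VV a (\<theta> a)) has_real_derivative VV_dx \<alpha> T * 1 + VV_dy \<alpha> T * t) (at \<alpha>)"
    unfolding T_def by (rule DERIV_VV[OF DERIV_ident t]) (use cT sT in \<open>simp_all add: T_def\<close>)
  moreover have "((\<lambda>a. VV \<beta> (\<gamma> - \<theta> a)) has_real_derivative
      VV_dx \<beta> (\<gamma> - T) * 0 + VV_dy \<beta> (\<gamma> - T) * (0 - t)) (at \<alpha>)"
    unfolding T_def by (rule DERIV_VV[OF DERIV_const DERIV_diff[OF DERIV_const t]])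
      (use dy(1,2) sgT in \<open>simp_all add: T_def\<close>)
  ultimately have "((\<lambda>a. VV a (\<theta> a) + VV \<beta> (\<gamma> - \<theta> a)) has_real_derivative VV_dx \<alpha> T) (at \<alpha>)"
    by (rule DERIV_cong[OF DERIV_add]) (simp add: dy(3))
  then have "((\<lambda>a. VV a (omega \<gamma> a \<beta>) + VV \<beta> (omega \<gamma> \<beta> a)) has_real_derivative VV_dx \<alpha> T) (at \<alpha>)"
    by (rule has_field_derivative_transform_within_open[OF _ S]) (rule VV_omega_sum[OF assms(1) rel, symmetric])
  then show ?thesis by (simp only: VV_dx_omega[OF relT assms])
qed

lemma DERIV_Iphi_difference:
  fixes \<alpha> \<beta> \<gamma> :: real
  assumes n1: "cos \<beta> + cos (\<alpha> + \<gamma>) \<noteq> 0" and n2: "cos \<beta> + cos (\<alpha> - \<gamma>) \<noteq> 0"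
  shows "((\<lambda>a. Iphi (pi - \<gamma>) ((a - \<beta> - \<gamma> + pi) / 2) - Iphi \<gamma> ((a + \<beta> + \<gamma> - pi) / 2))
           has_real_derivative ln \<bar>(cos \<beta> + cos (\<alpha> + \<gamma>)) / (cos \<beta> + cos (\<alpha> - \<gamma>))\<bar> / 2) (at \<alpha>)"
proof -
  define p q where "p = (\<alpha> - \<beta> - \<gamma> + pi) / 2" and "q = (\<alpha> + \<beta> + \<gamma> - pi) / 2"
  have e: "pi - \<gamma> - p - q = pi - (\<alpha> + \<gamma>)" "pi - \<gamma> - p + q = \<beta>"
    "p - (\<gamma> - q) = \<alpha> - \<gamma>" "p + (\<gamma> - q) = pi - \<beta>"
    by (simp_all add: p_def q_def field_simps)
  have P1: "cos \<beta> + cos (\<alpha> + \<gamma>) = - (2 * sin (pi - \<gamma> - p) * sin q)"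
    using sin_times_sin[of "pi - \<gamma> - p" q, unfolded e] by simp
  have P2: "cos \<beta> + cos (\<alpha> - \<gamma>) = 2 * sin p * sin (\<gamma> - q)"
    using sin_times_sin[of p "\<gamma> - q", unfolded e] by simp
  have nz: "sin (pi - \<gamma> - p) \<noteq> 0" "sin q \<noteq> 0" "sin p \<noteq> 0" "sin (\<gamma> - q) \<noteq> 0"
    using n1 n2 unfolding P1 P2 by auto
  have "((\<lambda>a. Iphi (pi - \<gamma>) ((a - \<beta> - \<gamma> + pi) / 2) - Iphi \<gamma> ((a + \<beta> + \<gamma> - pi) / 2))
      has_real_derivative ln \<bar>sin (pi - \<gamma> - p) / sin p\<bar> * (1/2) - ln \<bar>sin (\<gamma> - q) / sin q\<bar> * (1/2)) (at \<alpha>)"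
    using nz unfolding p_def q_def by (intro DERIV_diff DERIV_Iphi_comp) (auto intro!: derivative_eq_intros)
  moreover have "ln \<bar>sin (pi - \<gamma> - p) / sin p\<bar> * (1/2) - ln \<bar>sin (\<gamma> - q) / sin q\<bar> * (1/2) =
      ln \<bar>(cos \<beta> + cos (\<alpha> + \<gamma>)) / (cos \<beta> + cos (\<alpha> - \<gamma>))\<bar> / 2"
    unfolding P1 P2 using nz by (simp add: ln_abs ln_div ln_mult ln_minus field_simps)
  ultimately show ?thesis by (rule DERIV_cong)
qed

lemma Iphi_difference_at_pi_half:
  "Iphi (pi - \<gamma>) ((pi/2 - \<beta> - \<gamma> + pi) / 2) - Iphi \<gamma> ((pi/2 + \<beta> + \<gamma> - pi) / 2) = 2 * VV \<beta> \<gamma>"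
proof -
  define u v where "u = (\<beta> + \<gamma>) / 2 - pi/4" and "v = (\<beta> - \<gamma>) / 2 - pi/4"
  have "Lob ((pi/2 - \<beta> - \<gamma> + pi) / 2) = Lob (pi/2 - u)"
    by (rule arg_cong[where f=Lob]) (simp add: u_def field_simps)
  also have "\<dots> = - Lob (u + pi/2)" by (rule Lob_pi_half_minus)
  finally have 1: "Lob ((pi/2 - \<beta> - \<gamma> + pi) / 2) = - Lob (u + pi/2)" .
  have 2: "Lob (pi - \<gamma> - (pi/2 - \<beta> - \<gamma> + pi) / 2) = Lob (v + pi/2)"
    by (rule arg_cong[where f=Lob]) (simp add: v_def field_simps)
  have "Lob ((pi - \<gamma>) / 2) = Lob (pi/2 - \<gamma>/2)"
    by (rule arg_cong[where f=Lob]) (simp add: field_simps)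
  also have "\<dots> = - Lob (\<gamma>/2 + pi/2)" by (rule Lob_pi_half_minus)
  finally have 3: "Lob ((pi - \<gamma>) / 2) = - Lob (\<gamma>/2 + pi/2)" .
  have 4: "Lob ((pi/2 + \<beta> + \<gamma> - pi) / 2) = Lob u"
    by (rule arg_cong[where f=Lob]) (simp add: u_def field_simps)
  have "Lob (\<gamma> - (pi/2 + \<beta> + \<gamma> - pi) / 2) = Lob (- v)"
    by (rule arg_cong[where f=Lob]) (simp add: v_def field_simps)
  then have 5: "Lob (\<gamma> - (pi/2 + \<beta> + \<gamma> - pi) / 2) = - Lob v" by (simp only: Lob_minus)
  have "Lob (2 * u) = Lob (- (- \<beta> + pi/2 - \<gamma>))"
    by (rule arg_cong[where f=Lob]) (simp add: u_def field_simps)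
  then have 6: "Lob (2 * u) = - Lob (- \<beta> + pi/2 - \<gamma>)" by (simp only: Lob_minus)
  have "Lob (2 * v) = Lob ((\<beta> + pi/2 - \<gamma>) - pi)"
    by (rule arg_cong[where f=Lob]) (simp add: v_def field_simps)
  then have 7: "Lob (2 * v) = Lob (\<beta> + pi/2 - \<gamma>)" by (simp only: Lob_minus_pi)
  have 8: "Lob (2 * (\<gamma>/2)) = Lob \<gamma>" by simp
  show ?thesis
    unfolding Iphi_def VV_def 1 2 3 4 5
    using Lob_double[of u] Lob_double[of v] Lob_double[of "\<gamma>/2"] 6 7 8 by argo
qed

lemma lemma5_sin_eq_0:
  assumes "sin \<gamma> = 0"
  shows "2 * VV \<alpha> (omega \<gamma> \<alpha> \<beta>) + 2 * VV \<beta> (omega \<gamma> \<beta> \<alpha>) =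
    Iphi (pi - \<gamma>) ((\<alpha> - \<beta> - \<gamma> + pi) / 2) - Iphi \<gamma> ((\<alpha> + \<beta> + \<gamma> - pi) / 2)"
proof -
  obtain k :: int where k: "\<gamma> = of_int k * pi" using assms by (auto simp: sin_zero_iff_int2)
  then have "pi - \<gamma> = of_int (1 - k) * pi" by (simp add: algebra_simps)
  then have "Iphi (pi - \<gamma>) x = 0" "Iphi \<gamma> x = 0" for x
    unfolding k by (simp_all only: Iphi_of_int_pi)
  moreover have "omega \<gamma> \<alpha> \<beta> = 0" "omega \<gamma> \<beta> \<alpha> = 0"
    using assms by (simp_all add: omega_def ext_arctan_quot_def)
  ultimately show ?thesis by simp
qed

lemma DERIV_lemma5_sides_diff:
  assumes "sin \<gamma> \<noteq> 0" "cos \<alpha> \<noteq> 0" "cos \<beta> + cos (\<alpha> + \<gamma>) \<noteq> 0" "cos \<beta> + cos (\<alpha> - \<gamma>) \<noteq> 0"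
  shows "((\<lambda>a. 2 * (VV a (omega \<gamma> a \<beta>) + VV \<beta> (omega \<gamma> \<beta> a)) -
           (Iphi (pi - \<gamma>) ((a - \<beta> - \<gamma> + pi) / 2) - Iphi \<gamma> ((a + \<beta> + \<gamma> - pi) / 2)))
           has_real_derivative 0) (at \<alpha>)"
  by (rule DERIV_cong[OF DERIV_diff[OF DERIV_cmult[OF DERIV_VV_omega_sum[OF assms]]
        DERIV_Iphi_difference[OF assms(3,4)]]]) simp

lemma lemma5_sin_ne_0:
  assumes "sin \<gamma> \<noteq> 0"
  shows "2 * VV \<alpha> (omega \<gamma> \<alpha> \<beta>) + 2 * VV \<beta> (omega \<gamma> \<beta> \<alpha>) =
    Iphi (pi - \<gamma>) ((\<alpha> - \<beta> - \<gamma> + pi) / 2) - Iphi \<gamma> ((\<alpha> + \<beta> + \<gamma> - pi) / 2)"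
proof -
  define L where "L a = 2 * (VV a (omega \<gamma> a \<beta>) + VV \<beta> (omega \<gamma> \<beta> a))" for a
  define R where "R a = Iphi (pi - \<gamma>) ((a - \<beta> - \<gamma> + pi) / 2) - Iphi \<gamma> ((a + \<beta> + \<gamma> - pi) / 2)" for a
  define E where "E = {a. cos a = 0} \<union> {a. cos \<beta> + cos (a + \<gamma>) = 0} \<union> {a. cos \<beta> + cos (a - \<gamma>) = 0}"
  have "L \<alpha> - R \<alpha> = L (pi/2) - R (pi/2)"
  proof (rule DERIV_zero_locally_finite_constant[where h="\<lambda>a. L a - R a" and E=E])
    have "isCont L a" for a
      unfolding L_def by (rule continuous_mult_left[OF isCont_VV_omega_sum[OF assms]])
    moreover have "isCont R a" for a
      unfolding R_def Iphi_def by (intro continuous_intros) auto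
    ultimately show "isCont (\<lambda>a. L a - R a) a" for a
      by (intro continuous_intros)
    show "((\<lambda>a. L a - R a) has_real_derivative 0) (at a)" if "a \<notin> E" for a
      unfolding L_def R_def using that by (intro DERIV_lemma5_sides_diff assms) (auto simp: E_def)
    have "finite ({a. cos a = 0} \<inter> {s..t})" for s t :: real
      using finite_cos_comp_zeros[of "\<lambda>x. x"] by simp
    then show "finite (E \<inter> {s..t})" for s t
      using finite_cos_plus_cos_zeros[of \<beta> \<gamma> s t] finite_cos_plus_cos_zeros[of \<beta> "- \<gamma>" s t]
      unfolding E_def Int_Un_distrib2 by simp
  qed
  moreover have "L (pi/2) = 2 * VV \<beta> \<gamma>"
    using VV_omega_sum[OF assms, of \<beta> 0 "pi/2"] by (simp add: L_def)
  moreover have "R (pi/2) = 2 * VV \<beta> \<gamma>"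
    using Iphi_difference_at_pi_half by (simp add: R_def)
  ultimately show ?thesis by (simp add: L_def R_def)
qed

theorem lemma5:
  fixes \<alpha> \<beta> \<gamma> :: real
  shows "2 * VV \<alpha> (omega \<gamma> \<alpha> \<beta>) + 2 * VV \<beta> (omega \<gamma> \<beta> \<alpha>) =
    Iphi (pi - \<gamma>) ((\<alpha> - \<beta> - \<gamma> + pi) / 2) - Iphi \<gamma> ((\<alpha> + \<beta> + \<gamma> - pi) / 2)"
  using lemma5_sin_eq_0 lemma5_sin_ne_0 by blast

end
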